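(* Assume (C), (I) and (H). Then $Q^*\in\mathcal Q$ is a weak equilibrium if and only if $\Gamma^{Q^*}_i(Q^*_i)\ge\Gamma^{Q^*}_i(Q_i)$ for all $i\in S$ and all $Q\in\mathcal Q$.
   Context: Let $S=\{1,\dots,N\}$, $N\in\mathbb N$. For $i\in S$ let $E_i=\{q=(q_1,\dots,q_N)\in\mathbb R^N: q_j\ge0\text{ for }j\ne i,\ q_i=-\sum_{j\ne i}q_j\}$ and let $D_i\subseteq E_i$ be given. Let $\mathcal Q=\{Q\in\mathbb R^{N\times N}: Q_i\in D_i\ \forall i\in S\}$, where $Q_i$ is the $i$-th row of $Q$. For $Q\in\mathcal Q$, $X=(X_t)_{t\ge0}$ is a time-homogeneous continuous-time Markov chain on $S$ with generator $Q$, and $\mathbb E_{i,Q}$ is the expectation given $X_0=i$. A payoff function $f$ assigns a real number $f(t,i,\mathbf q)$ to each $t\ge0$, $i\in S$, $\mathbf q\in D_i$. Conditions: (C) $t\mapsto f(t,i,\mathbf q)$ is continuous on $[0,\infty)$ for each $i,\mathbf q$; (I) $\int_0^\infty\sup_{i\in S,\mathbf q\in D_i,\|\mathbf q\|\le c}|f(t,i,\mathbf q)|\,dt<\infty$ for every $c>0$; (H) there is a nonnegative function $h(t,\varepsilon;i,\mathbf q)$ with $|f(t+\varepsilon,i,\mathbf q)-f(t,i,\mathbf q)|\le h(t,\varepsilon;i,\mathbf q)$ for all $t\ge0,\varepsilon>0,i,\mathbf q$, $h$ nondecreasing in $\varepsilon$, $\lim_{\varepsilon\downarrow0}h=0$,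 and $\int_0^\infty h(t,\varepsilon;i,\mathbf q)dt<\infty$ for small $\varepsilon>0$. Define $F(i,Q)=\mathbb E_{i,Q}[\int_0^\infty f(t,X_t,Q_{X_t})dt]$ and $F(Q)=(F(1,Q),\dots,F(N,Q))$. For $Q,Q'\in\mathcal Q$, $\varepsilon>0$, $Q\otimes_\varepsilon Q'$ means $X$ evolves with generator $Q$ on $[0,\varepsilon]$ and $Q'$ on $(\varepsilon,\infty)$, and $F(i,Q\otimes_\varepsilon Q')$ is the corresponding expected payoff $\mathbb E_i[\int_0^\varepsilon f(t,X_t,Q_{X_t})dt+\int_\varepsilon^\infty f(t,X_t,Q'_{X_t})dt]$. $Q^*\in\mathcal Q$ is a weak equilibrium if $\liminf_{\varepsilon\downarrow0}\varepsilon^{-1}(F(i,Q^* )-F(i,Q\otimes_\varepsilon Q^* ))\ge0$ for all $Q\in\mathcal Q$, $i\in S$. For $Q^*\in\mathcal Q$, $i\in S$, $\mathbf q\in D_i$, $\Gamma^{Q^*}_i(\mathbf q)=f(0,i,\mathbf q)+\mathbf q\cdot F(Q^* )$. *)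

theory Defs
  imports "HOL-Analysis.Analysis"
begin

text \<open>State space S = the finite type 'n (with N = CARD('n)). A generator Q is a
  matrix real^'n^'n, its i-th row is Q $ i.\<close>

definition Erow :: "'n::finite \<Rightarrow> (real^'n) set" where
  "Erow i = {q. (\<forall>j. j \<noteq> i \<longrightarrow> q $ j \<ge> 0) \<and> q $ i = - (\<Sum>j\<in>UNIV - {i}. q $ j)}"

definition admissible :: "('n::finite \<Rightarrow> (real^'n) set) \<Rightarrow> (real^'n^'n) set" where
  "admissible D = {Q. \<forall>i. Q $ i \<in> D i}"

fun mpow :: "real^'n::finite^'n \<Rightarrow> nat \<Rightarrow> real^'n^'n" where
  "mpow Q 0 = mat 1"
| "mpow Q (Suc n) = Q ** mpow Q n"

text \<open>Transition matrix P_t = exp(tQ) of the time-homogeneous Markov chain with generator Q: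
  P_t(i,j) = Pr(X_t = j | X_0 = i).\<close>
definition trans :: "real^'n::finite^'n \<Rightarrow> real \<Rightarrow> real^'n^'n" where
  "trans Q t = (\<Sum>n. (t ^ n / fact n) *\<^sub>R mpow Q n)"

text \<open>F(i,Q) = E_{i,Q}[ int_0^oo f(t,X_t,Q_{X_t}) dt ], written via the transition matrices.\<close>
definition payoff :: "(real \<Rightarrow> 'n::finite \<Rightarrow> real^'n \<Rightarrow> real) \<Rightarrow> 'n \<Rightarrow> real^'n^'n \<Rightarrow> real" where
  "payoff f i Q = (LBINT t:{0..}. (\<Sum>j\<in>UNIV. trans Q t $ i $ j * f t j (Q $ j)))"

text \<open>F(i, Q \<otimes>_eps Q'): generator Q on [0,eps], Q' afterwards.\<close>
definition payoff_concat ::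
  "(real \<Rightarrow> 'n::finite \<Rightarrow> real^'n \<Rightarrow> real) \<Rightarrow> 'n \<Rightarrow> real^'n^'n \<Rightarrow> real \<Rightarrow> real^'n^'n \<Rightarrow> real" where
  "payoff_concat f i Q eps Q' =
     (LBINT t:{0..eps}. (\<Sum>j\<in>UNIV. trans Q t $ i $ j * f t j (Q $ j)))
   + (LBINT t:{eps<..}. (\<Sum>j\<in>UNIV. (trans Q eps ** trans Q' (t - eps)) $ i $ j * f t j (Q' $ j)))"

definition weak_equilibrium ::
  "('n::finite \<Rightarrow> (real^'n) set) \<Rightarrow> (real \<Rightarrow> 'n \<Rightarrow> real^'n \<Rightarrow> real) \<Rightarrow> real^'n^'n \<Rightarrow> bool" where
  "weak_equilibrium D f Qs \<longleftrightarrow> Qs \<in> admissible D \<and>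
     (\<forall>Q\<in>admissible D. \<forall>i.
        Liminf (at_right 0) (\<lambda>eps. ereal ((payoff f i Qs - payoff_concat f i Q eps Qs) / eps)) \<ge> 0)"

definition Gamma ::
  "(real \<Rightarrow> 'n::finite \<Rightarrow> real^'n \<Rightarrow> real) \<Rightarrow> real^'n^'n \<Rightarrow> 'n \<Rightarrow> real^'n \<Rightarrow> real" where
  "Gamma f Qs i q = f 0 i q + q \<bullet> (\<chi> j. payoff f j Qs)"

definition cond_C :: "('n::finite \<Rightarrow> (real^'n) set) \<Rightarrow> (real \<Rightarrow> 'n \<Rightarrow> real^'n \<Rightarrow> real) \<Rightarrow> bool" where
  "cond_C D f \<longleftrightarrow> (\<forall>i. \<forall>q\<in>D i. continuous_on {0..} (\<lambda>t. f t i q))"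

definition cond_I :: "('n::finite \<Rightarrow> (real^'n) set) \<Rightarrow> (real \<Rightarrow> 'n \<Rightarrow> real^'n \<Rightarrow> real) \<Rightarrow> bool" where
  "cond_I D f \<longleftrightarrow> (\<forall>c>0.
     (\<integral>\<^sup>+ t. (SUP iq\<in>{(i,q). q \<in> D i \<and> norm q \<le> c}. ennreal \<bar>f t (fst iq) (snd iq)\<bar>)
        * indicator {0..} t \<partial>lborel) < \<infinity>)"

definition cond_H :: "('n::finite \<Rightarrow> (real^'n) set) \<Rightarrow> (real \<Rightarrow> 'n \<Rightarrow> real^'n \<Rightarrow> real) \<Rightarrow> bool" where
  "cond_H D f \<longleftrightarrow> (\<exists>h :: real \<Rightarrow> real \<Rightarrow> 'n \<Rightarrow> real^'n \<Rightarrow> real.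
     (\<forall>t eps i q. t \<ge> 0 \<longrightarrow> eps > 0 \<longrightarrow> q \<in> D i \<longrightarrow>
        0 \<le> h t eps i q \<and> \<bar>f (t + eps) i q - f t i q\<bar> \<le> h t eps i q) \<and>
     (\<forall>t i q. t \<ge> 0 \<longrightarrow> q \<in> D i \<longrightarrow> mono_on {0<..} (\<lambda>eps. h t eps i q)) \<and>
     (\<forall>t i q. t \<ge> 0 \<longrightarrow> q \<in> D i \<longrightarrow> ((\<lambda>eps. h t eps i q) \<longlongrightarrow> 0) (at_right 0)) \<and>
     (\<forall>i. \<forall>q\<in>D i. \<exists>e0>0. \<forall>eps. 0 < eps \<and> eps < e0 \<longrightarrow>
        (\<integral>\<^sup>+ t. ennreal (h t eps i q) * indicator {0..} t \<partial>lborel) < \<infinity>))"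

end

theory Submission
  imports Defs
begin

text \<open>Split both payoffs at time eps by the semigroup property of the transition matrices
  P_t = exp (t Q): each is the running payoff on [0, eps] plus the continuation values
  G_eps(k) under Q*, weighted by the distribution at time eps. The difference quotient
  (F(i,Q*) - F(i, Q (x)_eps Q*)) / eps is therefore the difference of the averaged running
  payoffs plus the sum over k of ((P*_eps - I) / eps - (P_eps - I) / eps)_ik G_eps(k). As eps
  tends to 0 the averages tend to f(0,i,.) by continuity, the matrix quotients tend to the
  rows of Q* and Q, and G_eps(k) tends to F(k,Q*) by dominated convergence. So the liminf in
  the definition of a weak equilibrium is a limit, namely Gamma_i(Q*_i) - Gamma_i(Q_i).\<close>

section \<open>Matrix exponential\<close>

definition entry_norm :: "real^'n::finite^'n \<Rightarrow> real" where
  "entry_norm X = (\<Sum>i\<in>UNIV. \<Sum>j\<in>UNIV. \<bar>X $ i $ j\<bar>)"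

lemma row_norm_le_entry_norm: "(\<Sum>j\<in>UNIV. \<bar>X $ i $ j\<bar>) \<le> entry_norm X"
  unfolding entry_norm_def
  by (rule member_le_sum[where f="\<lambda>i. \<Sum>j\<in>UNIV. \<bar>X $ i $ j\<bar>"]) (auto intro: sum_nonneg)

lemma abs_entry_le_entry_norm: "\<bar>X $ i $ j\<bar> \<le> entry_norm X"
  using member_le_sum[of j UNIV "\<lambda>j. \<bar>X $ i $ j\<bar>"] row_norm_le_entry_norm[of X i] by simp

lemma abs_mpow_entry_le: "\<bar>mpow X n $ i $ j\<bar> \<le> entry_norm X ^ n"
proof (induction n arbitrary: i j)
  case 0
  then show ?case by (simp add: mat_def)
next
  case (Suc n)
  have "\<bar>mpow X (Suc n) $ i $ j\<bar> \<le> (\<Sum>k\<in>UNIV. \<bar>X $ i $ k\<bar> * \<bar>mpow X n $ k $ j\<bar>)"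
    by (simp add: matrix_matrix_mult_def abs_mult order_trans[OF sum_abs])
  also have "\<dots> \<le> (\<Sum>k\<in>UNIV. \<bar>X $ i $ k\<bar>) * entry_norm X ^ n"
    by (auto simp: sum_distrib_right intro!: sum_mono mult_left_mono Suc)
  also have "\<dots> \<le> entry_norm X ^ Suc n"
    using row_norm_le_entry_norm[of X i] abs_entry_le_entry_norm[of X i i]
    by (simp add: mult_right_mono)
  finally show ?case .
qed

lemma matrix_add_rdistrib: "(A + B) ** C = A ** C + B ** (C::'a::semiring_1^'p^'n)"
  by (simp add: matrix_matrix_mult_def vec_eq_iff sum.distrib distrib_right)

lemma matrix_sum_ldistrib: "A ** sum F S = (\<Sum>x\<in>S. A ** (F x :: 'a::semiring_1^'p^'n))"
  by (induction S rule: infinite_finite_induct) (auto simp: matrix_add_ldistrib)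

lemma matrix_sums_entrywise:
  fixes F :: "nat \<Rightarrow> real^'n::finite^'m::finite"
  assumes "\<And>i j. (\<lambda>n. F n $ i $ j) sums S $ i $ j"
  shows "F sums S"
  using assms unfolding sums_def by (intro vec_tendstoI) (simp add: sum_component)

lemma mpow_commute: "X ** Y = Y ** X \<Longrightarrow> mpow X n ** Y = Y ** mpow X n"
  by (induction n) (simp_all add: matrix_mul_assoc, metis matrix_mul_assoc)

lemma mpow_scaleR: "mpow (c *\<^sub>R X) n = c ^ n *\<^sub>R mpow X n"
  by (induction n) (auto simp: matrix_scalar_ac simp flip: scalar_matrix_assoc)

text \<open>The library's product on real^'n^'n is componentwise, so square matrices are not a
  Banach algebra there and the matrix exponential is developed by hand.\<close>

definition exp_term :: "real^'n::finite^'n \<Rightarrow> nat \<Rightarrow> real^'n^'n" where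
  "exp_term X n = (1 / fact n) *\<^sub>R mpow X n"

definition mat_exp :: "real^'n::finite^'n \<Rightarrow> real^'n^'n" where
  "mat_exp X = suminf (exp_term X)"

lemma summable_abs_exp_term_entry: "summable (\<lambda>n. \<bar>exp_term X n $ i $ j\<bar>)"
proof (rule summable_comparison_test')
  show "summable (\<lambda>n. entry_norm X ^ n / fact n)"
    using summable_exp[of "entry_norm X"] by (simp add: field_simps)
  show "norm \<bar>exp_term X n $ i $ j\<bar> \<le> entry_norm X ^ n / fact n" for n
    using abs_mpow_entry_le[of X n i j] by (simp add: exp_term_def divide_right_mono)
qed

lemma exp_term_sums_mat_exp: "exp_term X sums mat_exp X"
proof -
  have "exp_term X sums (\<chi> i j. \<Sum>n. exp_term X n $ i $ j)"
    by (intro matrix_sums_entrywise)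
       (simp add: summable_sums[OF summable_rabs_cancel[OF summable_abs_exp_term_entry]])
  then show ?thesis
    by (simp add: mat_exp_def sums_iff)
qed

lemma mat_exp_entry_sums: "(\<lambda>n. exp_term X n $ i $ j) sums mat_exp X $ i $ j"
  using sums_vec_nth[OF sums_vec_nth[OF exp_term_sums_mat_exp]] .

lemma mult_exp_term: "X ** exp_term X n = real (Suc n) *\<^sub>R exp_term X (Suc n)"
  by (simp add: exp_term_def matrix_scalar_ac fact_Suc flip: scalar_matrix_assoc)

lemma exp_term_commute: "X ** Y = Y ** X \<Longrightarrow> exp_term X n ** Y = Y ** exp_term X n"
  by (simp add: exp_term_def matrix_scalar_ac mpow_commute flip: scalar_matrix_assoc)

lemma exp_term_add_commuting:
  fixes X Y :: "real^'n::finite^'n"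
  assumes comm: "X ** Y = Y ** X"
  shows "exp_term (X + Y) n = (\<Sum>i\<le>n. exp_term X i ** exp_term Y (n - i))"
proof (induction n)
  case 0
  show ?case by (simp add: exp_term_def)
next
  case (Suc n)
  let ?T = exp_term
  have "real (Suc n) *\<^sub>R ?T (X + Y) (Suc n) = (X + Y) ** (\<Sum>i\<le>n. ?T X i ** ?T Y (n - i))"
    by (metis Suc.IH mult_exp_term)
  also have "\<dots> = (\<Sum>i\<le>n. (X ** ?T X i) ** ?T Y (n - i)) + (\<Sum>i\<le>n. ?T X i ** (Y ** ?T Y (n - i)))"
    by (simp add: matrix_add_rdistrib matrix_sum_ldistrib matrix_mul_assoc sum.distrib
        exp_term_commute[OF comm, symmetric])
  also have "\<dots> = (\<Sum>i\<le>n. real (Suc i) *\<^sub>R (?T X (Suc i) ** ?T Y (n - i)))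
                + (\<Sum>i\<le>n. real (Suc n - i) *\<^sub>R (?T X i ** ?T Y (Suc n - i)))"
    by (simp add: mult_exp_term Suc_diff_le matrix_scalar_ac flip: scalar_matrix_assoc)
  also have "\<dots> = (\<Sum>i\<le>Suc n. real i *\<^sub>R (?T X i ** ?T Y (Suc n - i)))
                + (\<Sum>i\<le>Suc n. real (Suc n - i) *\<^sub>R (?T X i ** ?T Y (Suc n - i)))"
    by (subst (2) sum.atMost_Suc) (simp add: sum.atMost_Suc_shift del: sum.atMost_Suc)
  also have "\<dots> = (\<Sum>i\<le>Suc n. real (Suc n) *\<^sub>R (?T X i ** ?T Y (Suc n - i)))"
    by (simp flip: sum.distrib scaleR_add_left of_nat_add)
  also have "\<dots> = real (Suc n) *\<^sub>R (\<Sum>i\<le>Suc n. ?T X i ** ?T Y (Suc n - i))"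
    by (simp only: scaleR_right.sum)
  finally show ?case
    by (simp del: sum.atMost_Suc)
qed

lemma mat_exp_add_commuting:
  fixes X Y :: "real^'n::finite^'n"
  assumes comm: "X ** Y = Y ** X"
  shows "mat_exp (X + Y) = mat_exp X ** mat_exp Y"
proof -
  have "(\<lambda>n. exp_term (X + Y) n $ i $ j) sums (mat_exp X ** mat_exp Y) $ i $ j" for i j
  proof -
    have "(\<lambda>n. \<Sum>m\<le>n. exp_term X m $ i $ k * exp_term Y (n - m) $ k $ j)
        sums (mat_exp X $ i $ k * mat_exp Y $ k $ j)" for k
      using Cauchy_product_sums[of "\<lambda>m. exp_term X m $ i $ k" "\<lambda>m. exp_term Y m $ k $ j"]
      by (simp add: summable_abs_exp_term_entry sums_unique[OF mat_exp_entry_sums])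
    then have "(\<lambda>n. \<Sum>k\<in>UNIV. \<Sum>m\<le>n. exp_term X m $ i $ k * exp_term Y (n - m) $ k $ j)
        sums (mat_exp X ** mat_exp Y) $ i $ j"
      unfolding matrix_matrix_mult_def by (simp add: sums_sum)
    then show ?thesis
      by (simp add: exp_term_add_commuting[OF comm] matrix_matrix_mult_def sum.swap[of _ UNIV])
  qed
  then show ?thesis
    using sums_unique2 mat_exp_entry_sums by (metis vec_eq_iff)
qed

lemma mat_exp_scaled_identity: "mat_exp (a *\<^sub>R mat 1) = exp a *\<^sub>R (mat 1 :: real^'n::finite^'n)"
proof -
  have "mpow (mat 1 :: real^'n^'n) n = mat 1" for n
    by (induction n) simp_all
  then have "(\<lambda>n. exp_term (a *\<^sub>R mat 1) n $ i $ j) sums (exp a *\<^sub>R (mat 1 :: real^'n^'n)) $ i $ j" for i j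
    using sums_mult2[OF exp_converges[of a], of "mat 1 $ i $ j"]
    by (simp add: exp_term_def mpow_scaleR divide_inverse_commute)
  then show ?thesis
    using sums_unique2 mat_exp_entry_sums by (metis vec_eq_iff)
qed

lemma mat_exp_add_scaled_identity: "mat_exp (X + a *\<^sub>R mat 1) = exp a *\<^sub>R mat_exp (X::real^'n::finite^'n)"
proof -
  have "X ** (a *\<^sub>R mat 1) = (a *\<^sub>R mat 1) ** X"
    by (simp add: matrix_scalar_ac flip: scalar_matrix_assoc)
  then show ?thesis
    by (simp add: mat_exp_add_commuting mat_exp_scaled_identity matrix_scalar_ac)
qed

section \<open>Transition matrices\<close>

lemma exp_term_scaleR: "exp_term (t *\<^sub>R Q) n = (t ^ n / fact n) *\<^sub>R mpow Q n"
  by (simp add: exp_term_def mpow_scaleR)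

lemma trans_eq_mat_exp: "trans Q t = mat_exp (t *\<^sub>R Q)"
  unfolding trans_def mat_exp_def by (simp add: exp_term_scaleR[abs_def])

lemma trans_add: "trans Q (s + t) = trans Q s ** trans Q t"
proof -
  have "(s *\<^sub>R Q) ** (t *\<^sub>R Q) = (t *\<^sub>R Q) ** (s *\<^sub>R Q)"
    by (simp add: matrix_scalar_ac flip: scalar_matrix_assoc)
  then show ?thesis
    by (simp add: trans_eq_mat_exp scaleR_add_left mat_exp_add_commuting)
qed

lemma trans_entry_sums: "(\<lambda>n. mpow Q n $ i $ j / fact n * t ^ n) sums trans Q t $ i $ j"
  using mat_exp_entry_sums[of "t *\<^sub>R Q" i j] by (simp add: trans_eq_mat_exp exp_term_scaleR ac_simps)

lemma trans_zero: "trans Q 0 = mat 1"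
proof -
  have "trans Q 0 $ i $ j = mat 1 $ i $ j" for i j
    using sums_unique2[OF trans_entry_sums[where t=0] powser_sums_zero] by simp
  then show ?thesis
    by (simp add: vec_eq_iff)
qed

lemma trans_entry_has_real_derivative:
  "((\<lambda>t. trans Q t $ i $ j) has_real_derivative
     (\<Sum>n. diffs (\<lambda>n. mpow Q n $ i $ j / fact n) n * t ^ n)) (at t)"
proof -
  have "(\<lambda>t. trans Q t $ i $ j) = (\<lambda>t. \<Sum>n. mpow Q n $ i $ j / fact n * t ^ n)"
    by (rule ext) (rule sums_unique[OF trans_entry_sums])
  moreover have "\<And>t. summable (\<lambda>n. mpow Q n $ i $ j / fact n * t ^ n)"
    using trans_entry_sums by (rule sums_summable)
  ultimately show ?thesis
    by (simp only: termdiffs_strong_converges_everywhere)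
qed

lemma trans_entry_has_real_derivative_0:
  "((\<lambda>t. trans Q t $ i $ j) has_real_derivative Q $ i $ j) (at 0)"
  using trans_entry_has_real_derivative[of Q i j 0] unfolding powser_zero by (simp add: diffs_def)

lemma continuous_on_trans_entry: "continuous_on A (\<lambda>t. trans Q t $ i $ j)"
  by (intro continuous_at_imp_continuous_on ballI DERIV_isCont[OF trans_entry_has_real_derivative])

lemma trans_entry_difference_quotient:
  "((\<lambda>e. (trans Q e $ i $ j - mat 1 $ i $ j) / e) \<longlongrightarrow> Q $ i $ j) (at_right 0)"
  using trans_entry_has_real_derivative_0[of Q i j]
  unfolding has_field_derivative_iff trans_zero by (auto intro: tendsto_mono[OF at_le])

definition generator :: "real^'n::finite^'n \<Rightarrow> bool" where
  "generator Q \<longleftrightarrow> (\<forall>i. Q $ i \<in> Erow i)"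

lemma generator_row_sum:
  assumes "generator Q"
  shows "(\<Sum>j\<in>UNIV. Q $ i $ j) = 0"
proof -
  have "Q $ i $ i = - (\<Sum>j\<in>UNIV - {i}. Q $ i $ j)"
    using assms by (auto simp: generator_def Erow_def)
  then show ?thesis
    by (simp add: sum.remove[of UNIV i])
qed

lemma generator_offdiag_nonneg: "generator Q \<Longrightarrow> i \<noteq> j \<Longrightarrow> 0 \<le> Q $ i $ j"
  by (auto simp: generator_def Erow_def)

lemma mpow_row_sum:
  assumes "generator Q"
  shows "(\<Sum>j\<in>UNIV. mpow Q n $ i $ j) = (if n = 0 then 1 else 0)"
proof (induction n arbitrary: i)
  case 0
  show ?case by (simp add: mat_def)
next
  case (Suc n)
  have "(\<Sum>j\<in>UNIV. mpow Q (Suc n) $ i $ j) = (\<Sum>j\<in>UNIV. \<Sum>k\<in>UNIV. Q $ i $ k * mpow Q n $ k $ j)"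
    by (simp add: matrix_matrix_mult_def)
  also have "\<dots> = (\<Sum>k\<in>UNIV. Q $ i $ k * (\<Sum>j\<in>UNIV. mpow Q n $ k $ j))"
    by (simp add: sum_distrib_left) (rule sum.swap)
  also have "\<dots> = (\<Sum>k\<in>UNIV. Q $ i $ k) * (if n = 0 then 1 else 0)"
    by (simp add: Suc.IH sum_distrib_right)
  finally show ?case
    by (simp add: generator_row_sum[OF assms])
qed

lemma trans_row_sum:
  assumes "generator Q"
  shows "(\<Sum>j\<in>UNIV. trans Q t $ i $ j) = 1"
proof -
  have "(\<lambda>n. \<Sum>j\<in>UNIV. mpow Q n $ i $ j / fact n * t ^ n) sums (\<Sum>j\<in>UNIV. trans Q t $ i $ j)"
    by (rule sums_sum) (rule trans_entry_sums)
  moreover have "(\<Sum>j\<in>UNIV. mpow Q n $ i $ j / fact n * t ^ n) = (if n = 0 then 1 else 0)" for n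
    using mpow_row_sum[OF assms, of n i] by (simp flip: sum_distrib_right sum_divide_distrib)
  ultimately have "(\<lambda>n. if n = 0 then 1 else 0 :: real) sums (\<Sum>j\<in>UNIV. trans Q t $ i $ j)"
    by simp
  then show ?thesis
    using sums_single[of 0 "\<lambda>_. 1 :: real"] sums_unique2 by auto
qed

lemma trans_entry_nonneg_of_nonneg:
  assumes "\<And>i j. 0 \<le> A $ i $ j" and "0 \<le> t"
  shows "0 \<le> trans A t $ i $ j"
proof -
  have "0 \<le> mpow A n $ i $ j" for n i j
    by (induction n arbitrary: i j) (simp_all add: mat_def matrix_matrix_mult_def assms sum_nonneg)
  then show ?thesis
    by (intro sums_le[OF _ sums_zero trans_entry_sums]) (simp add: assms)
qed

lemma trans_entry_nonneg:
  assumes Q: "generator Q" and t: "0 \<le> t"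
  shows "0 \<le> trans Q t $ i $ j"
proof -
  \<comment> \<open>The shift by a multiple of the identity makes all entries nonnegative and only rescales
    the exponential by a positive factor.\<close>
  define A where "A = Q + entry_norm Q *\<^sub>R mat 1"
  have "0 \<le> A $ k $ l" for k l
    using generator_offdiag_nonneg[OF Q, of k l] abs_entry_le_entry_norm[of Q k k]
    by (cases "k = l") (auto simp: A_def mat_def)
  then have "0 \<le> trans A t $ i $ j"
    using t by (rule trans_entry_nonneg_of_nonneg)
  moreover have "trans A t = exp (t * entry_norm Q) *\<^sub>R trans Q t"
    by (simp add: A_def trans_eq_mat_exp scaleR_add_right mat_exp_add_scaled_identity)
  ultimately show ?thesis
    by (simp add: zero_le_mult_iff)
qed

lemma abs_trans_entry_le_one:
  assumes Q: "generator Q" and t: "0 \<le> t"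
  shows "\<bar>trans Q t $ i $ j\<bar> \<le> 1"
proof -
  have "trans Q t $ i $ j \<le> (\<Sum>k\<in>UNIV. trans Q t $ i $ k)"
    by (rule member_le_sum) (simp_all add: trans_entry_nonneg[OF Q t])
  then show ?thesis
    using trans_row_sum[OF Q] trans_entry_nonneg[OF Q t] by simp
qed

section \<open>Integrals over the half-line\<close>

lemma set_integrable_of_continuous_on:
  fixes u :: "real \<Rightarrow> real"
  assumes "A \<in> sets borel" and "continuous_on A u"
    and "(\<integral>\<^sup>+t. ennreal \<bar>u t\<bar> * indicator A t \<partial>lborel) < \<infinity>"
  shows "set_integrable lborel A u"
  unfolding set_integrable_def
proof (rule integrableI_bounded)
  show "(\<lambda>t. indicator A t *\<^sub>R u t) \<in> borel_measurable lborel"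
    using borel_measurable_continuous_on_indicator[OF assms(1,2)] by simp
  have "(\<integral>\<^sup>+t. ennreal (norm (indicator A t *\<^sub>R u t)) \<partial>lborel)
      = (\<integral>\<^sup>+t. ennreal \<bar>u t\<bar> * indicator A t \<partial>lborel)"
    by (intro nn_integral_cong) (auto simp: indicator_def)
  then show "(\<integral>\<^sup>+t. ennreal (norm (indicator A t *\<^sub>R u t)) \<partial>lborel) < \<infinity>"
    using assms(3) by simp
qed

lemma set_integrable_mult_bounded_continuous:
  fixes u w :: "real \<Rightarrow> real"
  assumes u: "set_integrable lborel A u" and w: "continuous_on UNIV w"
    and bound: "\<And>t. t \<in> A \<Longrightarrow> \<bar>w t\<bar> \<le> B"
  shows "set_integrable lborel A (\<lambda>t. w t * u t)"
proof (rule set_integrable_bound[OF set_integrable_mult_right[OF u, of B]])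
  have "(\<lambda>t. w t * (indicator A t *\<^sub>R u t)) \<in> borel_measurable lborel"
    using borel_measurable_continuous_onI[OF w] borel_measurable_integrable[OF u[unfolded set_integrable_def]]
    by simp
  then show "set_borel_measurable lborel A (\<lambda>t. w t * u t)"
    unfolding set_borel_measurable_def by (simp add: ac_simps)
  show "AE t in lborel. t \<in> A \<longrightarrow> norm (w t * u t) \<le> norm (B * u t)"
  proof (intro AE_I2 impI)
    fix t
    assume "t \<in> A"
    then have "\<bar>w t\<bar> \<le> \<bar>B\<bar>"
      using bound[of t] by linarith
    then show "norm (w t * u t) \<le> norm (B * u t)"
      by (simp add: abs_mult mult_right_mono)
  qed
qed

lemma
  fixes g :: "'a \<Rightarrow> real \<Rightarrow> real"
  assumes "\<And>k. k \<in> I \<Longrightarrow> set_integrable lborel A (g k)"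
  shows set_integrable_sum: "set_integrable lborel A (\<lambda>x. \<Sum>k\<in>I. g k x)"
    and set_integral_sum: "(LBINT x:A. (\<Sum>k\<in>I. g k x)) = (\<Sum>k\<in>I. LBINT x:A. g k x)"
proof -
  have indicator_sum: "(\<lambda>x. indicator A x *\<^sub>R (\<Sum>k\<in>I. g k x)) = (\<lambda>x. \<Sum>k\<in>I. indicator A x *\<^sub>R g k x)"
    by (simp add: sum_distrib_left)
  show "set_integrable lborel A (\<lambda>x. \<Sum>k\<in>I. g k x)"
    using assms unfolding set_integrable_def indicator_sum by (rule Bochner_Integration.integrable_sum)
  show "(LBINT x:A. (\<Sum>k\<in>I. g k x)) = (\<Sum>k\<in>I. LBINT x:A. g k x)"
    using assms unfolding set_lebesgue_integral_def set_integrable_def indicator_sum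
    by (rule Bochner_Integration.integral_sum)
qed

lemma set_integral_Ioi_shift:
  fixes v :: "real \<Rightarrow> real"
  shows "(LBINT t:{e<..}. v t) = (LBINT s:{0..}. v (s + e))"
proof -
  have "(LBINT t:{e<..}. v t) = (\<integral>s. indicator {e<..} (e + 1 * s) *\<^sub>R v (e + 1 * s) \<partial>lborel)"
    unfolding set_lebesgue_integral_def
    using lborel_integral_real_affine[of 1 "\<lambda>t. indicator {e<..} t *\<^sub>R v t" e] by simp
  also have "\<dots> = (\<integral>s. indicator {0..} s *\<^sub>R v (s + e) \<partial>lborel)"
    by (rule integral_discrete_difference[where X="{0}"]) (auto simp: indicator_def add.commute)
  finally show ?thesis
    unfolding set_lebesgue_integral_def .
qed

lemma set_integrable_shift:
  fixes u :: "real \<Rightarrow> real"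
  assumes u: "set_integrable lborel {0..} u" and e: "0 \<le> e"
  shows "set_integrable lborel {0..} (\<lambda>s. u (s + e))"
proof -
  have "set_integrable lborel {e..} u"
    by (rule set_integrable_subset[OF u]) (use e in auto)
  then have "integrable lborel (\<lambda>s. indicator {e..} (e + 1 * s) *\<^sub>R u (e + 1 * s))"
    unfolding set_integrable_def by (rule lborel_integrable_real_affine) simp
  then show ?thesis
    unfolding set_integrable_def
    by (rule back_subst[where P="integrable lborel"]) (auto simp: indicator_def add.commute)
qed

lemma set_integral_average_tendsto_at_right:
  fixes v :: "real \<Rightarrow> real"
  assumes v: "continuous_on {0..} v"
  shows "((\<lambda>e. (LBINT t:{0..e}. v t) / e) \<longlongrightarrow> v 0) (at_right 0)"
proof -
  have "((\<lambda>e. integral {0..e} v) has_real_derivative v 0) (at 0 within {0..1})"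
    unfolding has_real_derivative_iff_has_vector_derivative
    by (rule integral_has_vector_derivative) (auto intro: continuous_on_subset[OF v])
  then have lim: "((\<lambda>e. integral {0..e} v / e) \<longlongrightarrow> v 0) (at_right 0)"
    unfolding has_field_derivative_iff at_within_Icc_at_right[OF zero_less_one] by simp
  have eq: "\<forall>\<^sub>F e in at_right 0. integral {0..e} v / e = (LBINT t:{0..e}. v t) / e"
  proof (rule eventually_at_right_less[THEN eventually_mono])
    fix e :: real
    have "set_integrable lborel {0..e} v"
      unfolding set_integrable_def
      by (rule borel_integrable_compact) (auto intro: continuous_on_subset[OF v])
    then show "integral {0..e} v / e = (LBINT t:{0..e}. v t) / e"
      by (simp add: set_borel_integral_eq_integral)
  qed
  show ?thesis
    using lim eq by (rule Lim_transform_eventually)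
qed

lemma translation_differences_dominated:
  fixes u :: "real \<Rightarrow> real" and h :: "real \<Rightarrow> real \<Rightarrow> real" and S :: "nat \<Rightarrow> real"
  assumes u: "set_integrable lborel {0..} u"
    and h_bound: "\<And>s e. 0 \<le> s \<Longrightarrow> 0 < e \<Longrightarrow> \<bar>u (s + e) - u s\<bar> \<le> h s e"
    and h_mono: "\<And>s. 0 \<le> s \<Longrightarrow> mono_on {0<..} (h s)"
    and h_int: "(\<integral>\<^sup>+s. ennreal (h s (S 0)) * indicator {0..} s \<partial>lborel) < \<infinity>"
    and S: "\<And>n. 0 < S n" "decseq S"
  obtains E where "integrable lborel E" and "\<And>s. 0 \<le> E s"
    and "\<And>n s. 0 \<le> s \<Longrightarrow> \<bar>u (s + S n) - u s\<bar> \<le> E s"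
proof -
  \<comment> \<open>h need not be measurable, so the dominating function is the measurable envelope
    of the differences, which lies below h.\<close>
  define d where "d n s = indicator {0..} s * \<bar>u (s + S n) - u s\<bar>" for n s
  define E where "E s = (SUP n. d n s)" for s
  have d_le: "d n s \<le> indicator {0..} s * h s (S 0)" for n s
  proof (cases "0 \<le> s")
    case True
    have "\<bar>u (s + S n) - u s\<bar> \<le> h s (S n)"
      by (rule h_bound[OF True S(1)])
    also have "\<dots> \<le> h s (S 0)"
      by (rule mono_onD[OF h_mono[OF True]]) (use S decseqD[OF S(2), of 0 n] in auto)
    finally show ?thesis
      using True by (simp add: d_def)
  qed (simp add: d_def)
  have bdd: "bdd_above (range (\<lambda>n. d n s))" for s
    using d_le by (intro bdd_aboveI2)
  have d_le_E: "d n s \<le> E s" for n s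
    unfolding E_def by (rule cSUP_upper[OF _ bdd]) simp
  have E_nonneg: "0 \<le> E s" for s
    using d_le_E[of 0 s] by (simp add: d_def order_trans[rotated])
  have d_meas: "d n \<in> borel_measurable lborel" for n
  proof -
    have "d n = (\<lambda>s. \<bar>indicator {0..} s *\<^sub>R u (s + S n) - indicator {0..} s *\<^sub>R u s\<bar>)"
      by (auto simp: d_def fun_eq_iff indicator_def)
    then show ?thesis
      using set_integrable_shift[OF u less_imp_le[OF S(1)], of n] u
      by (simp add: set_integrable_def borel_measurable_integrable)
  qed
  have "integrable lborel E"
  proof (rule integrableI_bounded)
    show "E \<in> borel_measurable lborel"
      unfolding E_def using d_meas bdd by (intro borel_measurable_cSUP) auto
    have "(\<integral>\<^sup>+s. ennreal (norm (E s)) \<partial>lborel) \<le> (\<integral>\<^sup>+s. ennreal (h s (S 0)) * indicator {0..} s \<partial>lborel)"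
    proof (rule nn_integral_mono)
      fix s
      have "E s \<le> indicator {0..} s * h s (S 0)"
        unfolding E_def by (rule cSUP_least) (auto simp: d_le)
      then show "ennreal (norm (E s)) \<le> ennreal (h s (S 0)) * indicator {0..} s"
        using E_nonneg[of s] by (auto simp: indicator_def)
    qed
    then show "(\<integral>\<^sup>+s. ennreal (norm (E s)) \<partial>lborel) < \<infinity>"
      using h_int by (rule le_less_trans)
  qed
  moreover have "\<bar>u (s + S n) - u s\<bar> \<le> E s" if "0 \<le> s" for n s
    using d_le_E[of n s] that by (simp add: d_def)
  ultimately show ?thesis
    using E_nonneg that by blast
qed

lemma LIMSEQ_set_integral_translate:
  fixes u w E :: "real \<Rightarrow> real" and S :: "nat \<Rightarrow> real"
  assumes u_cont: "continuous_on {0..} u" and u: "set_integrable lborel {0..} u"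
    and w_cont: "continuous_on UNIV w" and w_bound: "\<And>t. 0 \<le> t \<Longrightarrow> \<bar>w t\<bar> \<le> 1"
    and E: "integrable lborel E" "\<And>s. 0 \<le> E s"
    and dom: "\<And>n s. 0 \<le> s \<Longrightarrow> \<bar>u (s + S n) - u s\<bar> \<le> E s"
    and S: "\<And>n. 0 \<le> S n" "S \<longlonglongrightarrow> 0"
  shows "(\<lambda>n. LBINT s:{0..}. w s * u (s + S n)) \<longlonglongrightarrow> (LBINT s:{0..}. w s * u s)"
  unfolding set_lebesgue_integral_def
proof (rule integral_dominated_convergence)
  have "set_integrable lborel {0..} (\<lambda>s. w s * u s)"
    using u w_cont w_bound by (rule set_integrable_mult_bounded_continuous) simp
  then show "(\<lambda>s. indicator {0..} s *\<^sub>R (w s * u s)) \<in> borel_measurable lborel"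
    unfolding set_integrable_def by (rule borel_measurable_integrable)
  have "set_integrable lborel {0..} (\<lambda>s. w s * u (s + S n))" for n
    using set_integrable_shift[OF u S(1)] w_cont w_bound
    by (rule set_integrable_mult_bounded_continuous) simp
  then show "(\<lambda>s. indicator {0..} s *\<^sub>R (w s * u (s + S n))) \<in> borel_measurable lborel" for n
    unfolding set_integrable_def by (rule borel_measurable_integrable)
  show "integrable lborel (\<lambda>s. norm (indicator {0..} s *\<^sub>R u s) + E s)"
    using u E(1) unfolding set_integrable_def by auto
  show "AE s in lborel. (\<lambda>n. indicator {0..} s *\<^sub>R (w s * u (s + S n)))
                         \<longlonglongrightarrow> indicator {0..} s *\<^sub>R (w s * u s)"
  proof (rule AE_I2)
    fix s :: real
    show "(\<lambda>n. indicator {0..} s *\<^sub>R (w s * u (s + S n))) \<longlonglongrightarrow> indicator {0..} s *\<^sub>R (w s * u s)"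
    proof (cases "0 \<le> s")
      case True
      have "(\<lambda>n. s + S n) \<longlonglongrightarrow> s + 0"
        by (intro tendsto_intros S(2))
      then have "(\<lambda>n. u (s + S n)) \<longlonglongrightarrow> u s"
        using True S(1)
        by (intro continuous_on_tendsto_compose[OF u_cont] always_eventually allI) simp_all
      then show ?thesis
        by (intro tendsto_intros)
    qed simp
  qed
  show "AE s in lborel. norm (indicator {0..} s *\<^sub>R (w s * u (s + S n)))
                        \<le> norm (indicator {0..} s *\<^sub>R u s) + E s" for n
  proof (rule AE_I2)
    fix s :: real
    show "norm (indicator {0..} s *\<^sub>R (w s * u (s + S n))) \<le> norm (indicator {0..} s *\<^sub>R u s) + E s"
    proof (cases "0 \<le> s")
      case True
      have "\<bar>w s * u (s + S n)\<bar> \<le> \<bar>u (s + S n)\<bar>"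
        using w_bound[OF True] by (simp add: abs_mult mult_left_le_one_le)
      also have "\<dots> \<le> \<bar>u s\<bar> + E s"
        using dom[OF True, of n] by linarith
      finally show ?thesis
        using True by simp
    qed (simp add: E(2))
  qed
qed

lemma set_integral_translate_tendsto:
  fixes u w :: "real \<Rightarrow> real" and h :: "real \<Rightarrow> real \<Rightarrow> real"
  assumes u_cont: "continuous_on {0..} u" and u: "set_integrable lborel {0..} u"
    and w_cont: "continuous_on UNIV w" and w_bound: "\<And>t. 0 \<le> t \<Longrightarrow> \<bar>w t\<bar> \<le> 1"
    and h_bound: "\<And>s e. 0 \<le> s \<Longrightarrow> 0 < e \<Longrightarrow> \<bar>u (s + e) - u s\<bar> \<le> h s e"
    and h_mono: "\<And>s. 0 \<le> s \<Longrightarrow> mono_on {0<..} (h s)"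
    and e0: "0 < e0"
    and h_int: "\<And>e. 0 < e \<Longrightarrow> e < e0 \<Longrightarrow> (\<integral>\<^sup>+s. ennreal (h s e) * indicator {0..} s \<partial>lborel) < \<infinity>"
  shows "((\<lambda>e. LBINT s:{0..}. w s * u (s + e)) \<longlongrightarrow> (LBINT s:{0..}. w s * u s)) (at_right 0)"
proof (rule tendsto_at_right_sequentially[OF e0])
  fix S :: "nat \<Rightarrow> real"
  assume S: "\<And>n. 0 < S n" "\<And>n. S n < e0" "decseq S" "S \<longlonglongrightarrow> 0"
  obtain E where "integrable lborel E" "\<And>s. 0 \<le> E s"
    and "\<And>n s. 0 \<le> s \<Longrightarrow> \<bar>u (s + S n) - u s\<bar> \<le> E s"
    using translation_differences_dominated[OF u h_bound h_mono h_int[OF S(1,2)] S(1,3)] by blast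
  then show "(\<lambda>n. LBINT s:{0..}. w s * u (s + S n)) \<longlonglongrightarrow> (LBINT s:{0..}. w s * u s)"
    using S by (intro LIMSEQ_set_integral_translate[OF u_cont u w_cont w_bound]) (auto intro: less_imp_le)
qed

section \<open>The difference quotient of the payoff\<close>

definition running_payoff ::
  "(real \<Rightarrow> 'n::finite \<Rightarrow> real^'n \<Rightarrow> real) \<Rightarrow> real^'n^'n \<Rightarrow> 'n \<Rightarrow> real \<Rightarrow> real" where
  "running_payoff f Q i e = (LBINT t:{0..e}. (\<Sum>j\<in>UNIV. trans Q t $ i $ j * f t j (Q $ j)))"

definition continuation_value ::
  "(real \<Rightarrow> 'n::finite \<Rightarrow> real^'n \<Rightarrow> real) \<Rightarrow> real^'n^'n \<Rightarrow> real \<Rightarrow> 'n \<Rightarrow> real" where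
  "continuation_value f Q e k = (LBINT s:{0..}. (\<Sum>j\<in>UNIV. trans Q s $ k $ j * f (s + e) j (Q $ j)))"

lemma admissible_row: "Q \<in> admissible D \<Longrightarrow> Q $ j \<in> D j"
  by (simp add: admissible_def)

locale payoff_conditions =
  fixes D :: "'n::finite \<Rightarrow> (real^'n) set" and f :: "real \<Rightarrow> 'n \<Rightarrow> real^'n \<Rightarrow> real"
  assumes D_subset_Erow: "\<And>i. D i \<subseteq> Erow i"
    and C: "cond_C D f" and I: "cond_I D f" and H: "cond_H D f"
begin

lemma admissible_generator: "Q \<in> admissible D \<Longrightarrow> generator Q"
  using D_subset_Erow by (auto simp: admissible_def generator_def)

lemma continuous_on_payoff_rate: "Q \<in> admissible D \<Longrightarrow> continuous_on {0..} (\<lambda>t. f t j (Q $ j))"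
  using C admissible_row unfolding cond_C_def by blast

lemma set_integrable_payoff_rate:
  assumes Q: "Q \<in> admissible D"
  shows "set_integrable lborel {0..} (\<lambda>t. f t j (Q $ j))"
proof (rule set_integrable_of_continuous_on[OF _ continuous_on_payoff_rate[OF Q]])
  let ?S = "{(i, q). q \<in> D i \<and> norm q \<le> norm (Q $ j) + 1}"
  have "(\<integral>\<^sup>+t. ennreal \<bar>f t j (Q $ j)\<bar> * indicator {0..} t \<partial>lborel)
      \<le> (\<integral>\<^sup>+t. (SUP iq\<in>?S. ennreal \<bar>f t (fst iq) (snd iq)\<bar>) * indicator {0..} t \<partial>lborel)"
    using admissible_row[OF Q]
    by (intro nn_integral_mono mult_right_mono SUP_upper2[of "(j, Q $ j)"]) auto
  also have "\<dots> < \<infinity>"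
    using I[unfolded cond_I_def, rule_format, of "norm (Q $ j) + 1"] by (simp add: add_nonneg_pos)
  finally show "(\<integral>\<^sup>+t. ennreal \<bar>f t j (Q $ j)\<bar> * indicator {0..} t \<partial>lborel) < \<infinity>" .
qed simp

lemma set_integrable_trans_payoff_rate:
  assumes Q: "generator Q" and Qs: "Qs \<in> admissible D" and e: "0 \<le> e"
  shows "set_integrable lborel {0..} (\<lambda>t. trans Q t $ i $ j * f (t + e) j (Qs $ j))"
  using set_integrable_shift[OF set_integrable_payoff_rate[OF Qs] e] continuous_on_trans_entry
  by (rule set_integrable_mult_bounded_continuous[where B=1]) (simp add: abs_trans_entry_le_one[OF Q])

lemma set_integrable_expected_payoff_rate:
  assumes Q: "generator Q" and Qs: "Qs \<in> admissible D" and e: "0 \<le> e"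
  shows "set_integrable lborel {0..} (\<lambda>t. \<Sum>j\<in>UNIV. trans Q t $ i $ j * f (t + e) j (Qs $ j))"
  using set_integrable_trans_payoff_rate[OF assms] by (rule set_integrable_sum)

lemma integral_after_switch:
  assumes Qs: "Qs \<in> admissible D" and e: "0 < e"
  shows "(LBINT t:{e<..}. (\<Sum>j\<in>UNIV. (M ** trans Qs (t - e)) $ i $ j * f t j (Qs $ j)))
       = (\<Sum>k\<in>UNIV. M $ i $ k * continuation_value f Qs e k)"
proof -
  have "(\<Sum>j\<in>UNIV. (M ** trans Qs s) $ i $ j * f (s + e) j (Qs $ j))
      = (\<Sum>k\<in>UNIV. M $ i $ k * (\<Sum>j\<in>UNIV. trans Qs s $ k $ j * f (s + e) j (Qs $ j)))" for s
    by (simp add: matrix_matrix_mult_def sum_distrib_left sum_distrib_right mult.assoc)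
       (rule sum.swap)
  then have "(LBINT t:{e<..}. (\<Sum>j\<in>UNIV. (M ** trans Qs (t - e)) $ i $ j * f t j (Qs $ j)))
      = (LBINT s:{0..}. (\<Sum>k\<in>UNIV. M $ i $ k * (\<Sum>j\<in>UNIV. trans Qs s $ k $ j * f (s + e) j (Qs $ j))))"
    by (simp add: set_integral_Ioi_shift)
  also have "\<dots> = (\<Sum>k\<in>UNIV. M $ i $ k * continuation_value f Qs e k)"
    using set_integrable_expected_payoff_rate[OF admissible_generator[OF Qs] Qs less_imp_le[OF e]]
    by (simp add: set_integral_sum continuation_value_def)
  finally show ?thesis .
qed

lemma payoff_split:
  assumes Qs: "Qs \<in> admissible D" and e: "0 < e"
  shows "payoff f i Qs = running_payoff f Qs i e + (\<Sum>k\<in>UNIV. trans Qs e $ i $ k * continuation_value f Qs e k)"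
proof -
  let ?v = "\<lambda>t. \<Sum>j\<in>UNIV. trans Qs t $ i $ j * f t j (Qs $ j)"
  have v: "set_integrable lborel {0..} ?v"
    using set_integrable_expected_payoff_rate[OF admissible_generator[OF Qs] Qs order_refl, of i] by simp
  have "{0..} = {0..e} \<union> {e<..}"
    using e by auto
  then have "payoff f i Qs = (LBINT t:{0..e} \<union> {e<..}. ?v t)"
    by (simp add: payoff_def)
  also have "\<dots> = (LBINT t:{0..e}. ?v t) + (LBINT t:{e<..}. ?v t)"
    using e by (intro set_integral_Un) (auto intro: set_integrable_subset[OF v])
  also have "(LBINT t:{e<..}. ?v t)
      = (LBINT t:{e<..}. (\<Sum>j\<in>UNIV. (trans Qs e ** trans Qs (t - e)) $ i $ j * f t j (Qs $ j)))"
    by (simp flip: trans_add)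
  finally show ?thesis
    by (simp add: integral_after_switch[OF Qs e] running_payoff_def)
qed

lemma payoff_concat_split:
  assumes Qs: "Qs \<in> admissible D" and e: "0 < e"
  shows "payoff_concat f i Q e Qs = running_payoff f Q i e + (\<Sum>k\<in>UNIV. trans Q e $ i $ k * continuation_value f Qs e k)"
  unfolding payoff_concat_def integral_after_switch[OF Qs e] running_payoff_def ..

lemma running_payoff_average_tendsto:
  assumes Q: "Q \<in> admissible D"
  shows "((\<lambda>e. running_payoff f Q i e / e) \<longlongrightarrow> f 0 i (Q $ i)) (at_right 0)"
proof -
  have v: "continuous_on {0..} (\<lambda>t. \<Sum>j\<in>UNIV. trans Q t $ i $ j * f t j (Q $ j))"
    by (intro continuous_on_sum continuous_on_mult continuous_on_trans_entry continuous_on_payoff_rate[OF Q])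
  have v0: "(\<Sum>j\<in>UNIV. trans Q 0 $ i $ j * f 0 j (Q $ j)) = f 0 i (Q $ i)"
    by (simp add: trans_zero mat_def if_distrib[of "\<lambda>x. x * _"] cong: if_cong)
  show ?thesis
    using set_integral_average_tendsto_at_right[OF v] unfolding running_payoff_def v0 .
qed

text \<open>Pointwise convergence comes from the continuity condition (C); of condition (H) only
  the monotone integrable bound is used, to dominate the translated payoff rates.\<close>

lemma translated_payoff_rate_tendsto:
  assumes Q: "Q \<in> admissible D"
    and w_cont: "continuous_on UNIV w" and w_bound: "\<And>t. 0 \<le> t \<Longrightarrow> \<bar>w t\<bar> \<le> 1"
  shows "((\<lambda>e. LBINT s:{0..}. w s * f (s + e) j (Q $ j))
           \<longlongrightarrow> (LBINT s:{0..}. w s * f s j (Q $ j))) (at_right 0)"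
proof -
  obtain h :: "real \<Rightarrow> real \<Rightarrow> 'n \<Rightarrow> real^'n \<Rightarrow> real" where
    bound: "\<forall>t eps i q. t \<ge> 0 \<longrightarrow> eps > 0 \<longrightarrow> q \<in> D i \<longrightarrow>
      0 \<le> h t eps i q \<and> \<bar>f (t + eps) i q - f t i q\<bar> \<le> h t eps i q" and
    mono: "\<forall>t i q. t \<ge> 0 \<longrightarrow> q \<in> D i \<longrightarrow> mono_on {0<..} (\<lambda>eps. h t eps i q)" and
    int: "\<forall>i. \<forall>q\<in>D i. \<exists>e0>0. \<forall>eps. 0 < eps \<and> eps < e0 \<longrightarrow>
      (\<integral>\<^sup>+ t. ennreal (h t eps i q) * indicator {0..} t \<partial>lborel) < \<infinity>"
    using H unfolding cond_H_def by (elim exE conjE) (rule that)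
  have q: "Q $ j \<in> D j"
    by (rule admissible_row[OF Q])
  then obtain e0 where "0 < e0" and "\<forall>eps. 0 < eps \<and> eps < e0 \<longrightarrow>
      (\<integral>\<^sup>+ t. ennreal (h t eps j (Q $ j)) * indicator {0..} t \<partial>lborel) < \<infinity>"
    using int by blast
  then show ?thesis
    using bound mono q
    by (intro set_integral_translate_tendsto[OF continuous_on_payoff_rate[OF Q]
        set_integrable_payoff_rate[OF Q] w_cont w_bound, where h="\<lambda>s e. h s e j (Q $ j)"])
       auto
qed

lemma continuation_value_tendsto:
  assumes Qs: "Qs \<in> admissible D"
  shows "((\<lambda>e. continuation_value f Qs e k) \<longlongrightarrow> payoff f k Qs) (at_right 0)"
proof -
  let ?term = "\<lambda>e j. LBINT s:{0..}. trans Qs s $ k $ j * f (s + e) j (Qs $ j)"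
  have "((\<lambda>e. \<Sum>j\<in>UNIV. ?term e j) \<longlongrightarrow> (\<Sum>j\<in>UNIV. ?term 0 j)) (at_right 0)"
    using translated_payoff_rate_tendsto[OF Qs continuous_on_trans_entry
        abs_trans_entry_le_one[OF admissible_generator[OF Qs]]]
    by (intro tendsto_sum) simp
  moreover have sum_eq: "continuation_value f Qs e k = (\<Sum>j\<in>UNIV. ?term e j)" if "0 \<le> e" for e
    unfolding continuation_value_def
    using set_integrable_trans_payoff_rate[OF admissible_generator[OF Qs] Qs that]
    by (rule set_integral_sum)
  moreover have "continuation_value f Qs 0 k = payoff f k Qs"
    by (simp add: continuation_value_def payoff_def)
  ultimately have "((\<lambda>e. \<Sum>j\<in>UNIV. ?term e j) \<longlongrightarrow> payoff f k Qs) (at_right 0)"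
    by simp
  then show ?thesis
    by (rule Lim_transform_eventually)
       (rule eventually_mono[OF eventually_at_right_less], simp add: sum_eq)
qed

lemma payoff_difference_quotient_tendsto:
  assumes Q: "Q \<in> admissible D" and Qs: "Qs \<in> admissible D"
  shows "((\<lambda>e. (payoff f i Qs - payoff_concat f i Q e Qs) / e)
           \<longlongrightarrow> Gamma f Qs i (Qs $ i) - Gamma f Qs i (Q $ i)) (at_right 0)"
proof -
  let ?quot = "\<lambda>P e k. (trans P e $ i $ k - mat 1 $ i $ k) / e"
  have "((\<lambda>e. running_payoff f Qs i e / e - running_payoff f Q i e / e
              + (\<Sum>k\<in>UNIV. (?quot Qs e k - ?quot Q e k) * continuation_value f Qs e k))
         \<longlongrightarrow> f 0 i (Qs $ i) - f 0 i (Q $ i) + (\<Sum>k\<in>UNIV. (Qs $ i $ k - Q $ i $ k) * payoff f k Qs))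
         (at_right 0)"
    by (intro tendsto_intros running_payoff_average_tendsto Q Qs trans_entry_difference_quotient
        continuation_value_tendsto)
  moreover have "running_payoff f Qs i e / e - running_payoff f Q i e / e
        + (\<Sum>k\<in>UNIV. (?quot Qs e k - ?quot Q e k) * continuation_value f Qs e k)
      = (payoff f i Qs - payoff_concat f i Q e Qs) / e" if e: "0 < e" for e
  proof -
    have "(?quot Qs e k - ?quot Q e k) * continuation_value f Qs e k
        = (trans Qs e $ i $ k * continuation_value f Qs e k - trans Q e $ i $ k * continuation_value f Qs e k) / e" for k
      using e by (simp add: field_simps)
    then show ?thesis
      by (simp add: payoff_split[OF Qs e] payoff_concat_split[OF Qs e] sum_subtractf
          diff_divide_distrib add_divide_distrib flip: sum_divide_distrib)
  qed
  moreover have "Gamma f Qs i (Qs $ i) - Gamma f Qs i (Q $ i)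
      = f 0 i (Qs $ i) - f 0 i (Q $ i) + (\<Sum>k\<in>UNIV. (Qs $ i $ k - Q $ i $ k) * payoff f k Qs)"
    by (simp add: Gamma_def inner_vec_def left_diff_distrib sum_subtractf)
  ultimately show ?thesis
    by (auto elim!: Lim_transform_eventually intro: eventually_mono[OF eventually_at_right_less])
qed

end

theorem mainTheorem2:
  fixes D :: "'n::finite \<Rightarrow> (real^'n) set"
    and f :: "real \<Rightarrow> 'n \<Rightarrow> real^'n \<Rightarrow> real"
    and Qs :: "real^'n^'n"
  assumes "\<And>i. D i \<subseteq> Erow i"
    and "cond_C D f" and "cond_I D f" and "cond_H D f"
    and "Qs \<in> admissible D"
  shows "weak_equilibrium D f Qs \<longleftrightarrow>
           (\<forall>i. \<forall>Q\<in>admissible D. Gamma f Qs i (Qs $ i) \<ge> Gamma f Qs i (Q $ i))"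
proof -
  interpret payoff_conditions D f
    using assms(1-4) by unfold_locales
  have "Liminf (at_right 0) (\<lambda>eps. ereal ((payoff f i Qs - payoff_concat f i Q eps Qs) / eps))
      = ereal (Gamma f Qs i (Qs $ i) - Gamma f Qs i (Q $ i))" if "Q \<in> admissible D" for Q i
    using payoff_difference_quotient_tendsto[OF that assms(5)]
    by (intro lim_imp_Liminf tendsto_ereal) simp_all
  then show ?thesis
    using assms(5) unfolding weak_equilibrium_def by auto
qed

end
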